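(* Let $\epsilon\in(0,1/4]$. Define ${\rm sign}(x)=1$ if $x\ge0$ and ${\rm sign}(x)=-1$ otherwise. Define the sequence $(y(t))_{t\ge1}$ by $y(1)=0$ and $$y(t+1)=(1-\epsilon)y(t)-\frac{\frac12(1-\epsilon)\,{\rm sign}(y(t)-1)+\epsilon\Delta(t)}{\sqrt t},\qquad \Delta(t)=\frac{\epsilon\sqrt t\,y(t)-\frac{\epsilon}{2}{\rm sign}(y(t)-1)}{1-\epsilon}.$$ Then $y(t)\in[0,2]$ for all $t$; $y(t)\le\frac{2\epsilon^{-1}}{\sqrt t}$ for all $t$; and there exists $t_1$ such that $y(t)\ge\frac{\epsilon^{-1}}{16\sqrt t}$ for all $t\ge t_1$. *)

theory Defs
  imports Complex_Main
begin

definition sgnp :: "real \<Rightarrow> real" where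
  "sgnp x = (if x \<ge> 0 then 1 else -1)"

definition Delta :: "real \<Rightarrow> nat \<Rightarrow> real \<Rightarrow> real" where
  "Delta eps t y = (eps * sqrt (real t) * y - (eps / 2) * sgnp (y - 1)) / (1 - eps)"

(* yseq eps t is y(t) for t \<ge> 1; the value at t = 0 is an unused junk value *)
fun yseq :: "real \<Rightarrow> nat \<Rightarrow> real" where
  "yseq eps 0 = 0"
| "yseq eps (Suc t) =
     (if t = 0 then 0
      else (1 - eps) * yseq eps t
           - ((1/2) * (1 - eps) * sgnp (yseq eps t - 1) + eps * Delta eps t (yseq eps t))
             / sqrt (real t))"

end

theory Submission
  imports Defs
begin

text \<open>Substituting \<open>\<Delta>(t)\<close> collapses the recursion to
  \<open>y(t+1) = d (y(t) - sign(y(t) - 1) / (2\<surd>t))\<close> with the damping factor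
  \<open>d = (1 - 2\<epsilon>)/(1 - \<epsilon>) \<le> 1 - \<epsilon>\<close>. Every step moves \<open>y\<close> towards \<open>1\<close> by \<open>1/(2\<surd>t)\<close> and then
  damps it, which keeps \<open>y\<close> in \<open>[0,2]\<close>. Comparing \<open>\<surd>t\<close> with \<open>\<surd>(t+1)\<close> shows that the
  bound \<open>2/(\<epsilon>\<surd>t)\<close> is preserved once it is below \<open>2\<close>. Once \<open>y(t) < 1\<close>, the scaled
  quantity \<open>z(t) = y(t)\<surd>t\<close> obeys \<open>z(t+1) \<ge> d (z(t) + 1/2)\<close>, so it eventually exceeds
  half the fixed point \<open>d/(2(1-d)) = (1-2\<epsilon>)/(2\<epsilon>)\<close>.\<close>

definition damping :: "real \<Rightarrow> real" where
  "damping eps = (1 - 2*eps) / (1 - eps)"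

lemma damping_nonneg: "0 \<le> eps \<Longrightarrow> eps \<le> 1/2 \<Longrightarrow> 0 \<le> damping eps"
  by (simp add: damping_def)

lemma damping_le: "0 \<le> eps \<Longrightarrow> eps < 1 \<Longrightarrow> damping eps \<le> 1 - eps"
  by (simp add: damping_def field_simps)

lemma yseq_Suc_eq:
  assumes "eps \<noteq> 1" and "t \<ge> 1"
  shows "yseq eps (Suc t) =
    damping eps * (yseq eps t - sgnp (yseq eps t - 1) / (2 * sqrt (real t)))"
  using assms by (simp add: Delta_def damping_def field_simps)

lemma yseq_Suc_below_one:
  assumes "eps \<noteq> 1" and "t \<ge> 1" and "yseq eps t < 1"
  shows "yseq eps (Suc t) = damping eps * (yseq eps t + 1 / (2 * sqrt (real t)))"
  using yseq_Suc_eq[OF assms(1,2)] assms(3) by (simp add: sgnp_def)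

lemma yseq_Suc_le:
  assumes "0 \<le> eps" and "eps \<le> 1/2" and "t \<ge> 1"
  shows "yseq eps (Suc t) \<le> damping eps * (yseq eps t + 1 / (2 * sqrt (real t)))"
proof -
  have "- sgnp (yseq eps t - 1) / (2 * sqrt (real t)) \<le> 1 / (2 * sqrt (real t))"
    by (simp add: sgnp_def divide_right_mono)
  then show ?thesis
    using yseq_Suc_eq[of eps t] assms damping_nonneg[of eps]
    by (simp add: mult_left_mono)
qed

lemma yseq_bounded:
  assumes "0 \<le> eps" and "eps \<le> 1/2" and "t \<ge> 1"
  shows "0 \<le> yseq eps t \<and> yseq eps t \<le> 2"
  using assms(3)
proof (induction t rule: dec_induct)
  case base
  then show ?case by simp
next
  case (step t)
  define y where "y = yseq eps t"
  define h where "h = 1 / (2 * sqrt (real t))"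
  have h: "0 \<le> h" "h \<le> 1/2" using step(1) by (auto simp: h_def field_simps)
  have d: "0 \<le> damping eps" "damping eps \<le> 1"
    using assms damping_nonneg damping_le[of eps] by auto
  define x where "x = (if y \<ge> 1 then y - h else y + h)"
  have "yseq eps (Suc t) = damping eps * x"
    using yseq_Suc_eq[of eps t] step(1) assms(2)
    by (simp add: x_def y_def h_def sgnp_def diff_divide_distrib)
  moreover have "0 \<le> x" "x \<le> 2" using h step(3) by (auto simp: x_def y_def)
  moreover have "damping eps * x \<le> x" using d \<open>0 \<le> x\<close> by (simp add: mult_left_le_one_le)
  ultimately show ?case using d by simp
qed

lemma mult_sqrt_Suc_le_sqrt:
  fixes c :: real
  assumes "0 \<le> c" and "c^2 * (real t + 1) \<le> real t"
  shows "c * sqrt (real (Suc t)) \<le> sqrt (real t)"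
proof (rule power2_le_imp_le)
  show "(c * sqrt (real (Suc t)))^2 \<le> (sqrt (real t))^2"
    using assms by (simp add: power_mult_distrib add.commute)
qed simp

text \<open>While \<open>\<epsilon>\<surd>(t+1) \<le> 1\<close> the claim is weaker than \<open>y \<le> 2\<close>; afterwards \<open>\<epsilon>(t+1) > 4\<close>,
  and the shift \<open>1/(2\<surd>t)\<close> is absorbed by the damping.\<close>

lemma yseq_upper_bound:
  assumes eps: "0 < eps" "eps \<le> 1/4" and "t \<ge> 1"
  shows "yseq eps t \<le> 2 / (eps * sqrt (real t))"
  using assms(3)
proof (induction t rule: dec_induct)
  case base
  then show ?case using eps by simp
next
  case (step t)
  define s where "s = sqrt (real t)"
  define r where "r = sqrt (real (Suc t))"
  have s: "s \<ge> 1" and r: "r > 0" using step(1) by (auto simp: s_def r_def)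
  show ?case
  proof (cases "eps * r \<le> 1")
    case True
    then have "2 \<le> 2 / (eps * r)" using eps r by (simp add: field_simps)
    then show ?thesis using yseq_bounded[of eps "Suc t"] eps by (simp add: r_def)
  next
    case False
    have "1 < (eps * r)^2" using False eps r by (simp add: less_1_mult power2_eq_square)
    also have "(eps * r)^2 = eps * (eps * (real t + 1))"
      by (simp add: r_def power_mult_distrib power2_eq_square add.commute)
    also have "\<dots> \<le> (1/4) * (eps * (real t + 1))" using eps by (intro mult_right_mono) auto
    finally have large: "4 < eps * (real t + 1)" by simp
    have "((4 - 3*eps)/4)^2 * (real t + 1) \<le> real t"
    proof -
      have "4 * (24 - 9*eps) \<le> eps * (real t + 1) * (24 - 9*eps)"
        using large eps by (intro mult_right_mono) auto
      then show ?thesis using eps by (simp add: power2_eq_square field_simps)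
    qed
    then have "(4 - 3*eps) * r \<le> 4 * s"
      using mult_sqrt_Suc_le_sqrt[of "(4 - 3*eps)/4" t] eps by (simp add: r_def s_def)
    have "yseq eps (Suc t) \<le> damping eps * (yseq eps t + 1 / (2 * s))"
      using yseq_Suc_le[of eps t] eps step(1) by (simp add: s_def)
    also have "\<dots> \<le> (1 - eps) * (2 / (eps * s) + 1 / (2 * s))"
      using step(3) damping_le[of eps] damping_nonneg[of eps] yseq_bounded[of eps t] eps s step(1)
      by (intro mult_mono) (auto simp: s_def)
    also have "\<dots> = (1 - eps) * (4 + eps) / (2 * eps * s)" using eps s by (simp add: field_simps)
    also have "\<dots> \<le> (4 - 3*eps) / (2 * eps * s)"
      using eps s by (intro divide_right_mono) (auto simp: algebra_simps)
    also have "\<dots> = ((4 - 3*eps) * r) / (2 * eps * s * r)" using r by simp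
    also have "\<dots> \<le> (4 * s) / (2 * eps * s * r)"
      using \<open>(4 - 3*eps) * r \<le> 4 * s\<close> eps s r by (intro divide_right_mono) auto
    also have "\<dots> = 2 / (eps * r)" using s by simp
    finally show ?thesis by (simp add: r_def)
  qed
qed

lemma affine_recurrence_lower_bound:
  fixes z :: "nat \<Rightarrow> real"
  assumes "0 \<le> c" and "c \<noteq> 1" and "0 \<le> z 0" and "\<And>n. c * z n + b \<le> z (Suc n)"
  shows "b / (1 - c) * (1 - c^n) \<le> z n"
proof (induction n)
  case 0
  then show ?case using assms(3) by simp
next
  case (Suc n)
  have "b / (1 - c) * (1 - c ^ Suc n) = c * (b / (1 - c) * (1 - c^n)) + b"
    using assms(2) by (simp add: field_simps)
  also have "\<dots> \<le> c * z n + b" using Suc assms(1) by (intro add_right_mono mult_left_mono)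
  also have "\<dots> \<le> z (Suc n)" by (rule assms(4))
  finally show ?case .
qed

lemma yseq_scaled_step:
  assumes eps: "0 < eps" "eps \<le> 1/4" and large: "4 < eps^2 * real t"
  shows "damping eps * (yseq eps t * sqrt (real t) + 1/2) \<le> yseq eps (Suc t) * sqrt (real (Suc t))"
proof -
  have t: "t \<ge> 1" using large by (cases t) auto
  have "(2::real) = sqrt 4" by simp
  also have "\<dots> < sqrt (eps^2 * real t)" using large by (rule real_sqrt_less_mono)
  also have "\<dots> = eps * sqrt (real t)" using eps by (simp add: real_sqrt_mult)
  finally have "2 / (eps * sqrt (real t)) < 1" by simp
  then have "yseq eps t < 1" using yseq_upper_bound[OF eps t] by linarith
  then have "yseq eps (Suc t) = damping eps * (yseq eps t + 1 / (2 * sqrt (real t)))"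
    using yseq_Suc_below_one[OF _ t] eps by simp
  then have "damping eps * (yseq eps t * sqrt (real t) + 1/2) = yseq eps (Suc t) * sqrt (real t)"
    using t by (simp add: field_simps)
  also have "\<dots> \<le> yseq eps (Suc t) * sqrt (real (Suc t))"
    using yseq_bounded[of eps "Suc t"] eps by (intro mult_left_mono) auto
  finally show ?thesis .
qed

lemma yseq_scaled_ge_geometric:
  assumes eps: "0 < eps" "eps \<le> 1/4"
  defines "T0 \<equiv> nat \<lceil>4 / eps^2\<rceil> + 1" and "d \<equiv> damping eps"
  shows "d/2 / (1 - d) * (1 - d^n) \<le> yseq eps (T0 + n) * sqrt (real (T0 + n))"
proof -
  define z where "z n = yseq eps (T0 + n) * sqrt (real (T0 + n))" for n
  have large: "4 < eps^2 * real t" if "T0 \<le> t" for t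
  proof -
    have "4 / eps^2 \<le> real (nat \<lceil>4 / eps^2\<rceil>)" by (rule real_nat_ceiling_ge)
    also have "\<dots> < real t" using that by (simp add: T0_def)
    finally show ?thesis using eps by (simp add: field_simps)
  qed
  have "d * z n + d/2 \<le> z (Suc n)" for n
    using yseq_scaled_step[OF eps large[of "T0 + n"]]
    by (simp add: z_def d_def algebra_simps del: yseq.simps)
  moreover have "0 \<le> z 0"
    using yseq_bounded[of eps T0] eps by (simp add: z_def T0_def del: yseq.simps of_nat_Suc)
  moreover have "0 \<le> d" "d < 1" using eps damping_nonneg[of eps] damping_le[of eps] by (auto simp: d_def)
  ultimately show ?thesis
    using affine_recurrence_lower_bound[of d z "d/2" n] by (simp add: z_def)
qed

lemma yseq_eventually_lower:
  assumes eps: "0 < eps" "eps \<le> 1/4"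
  shows "\<exists>t1. \<forall>t\<ge>t1. t \<ge> 1 \<longrightarrow> yseq eps t \<ge> inverse eps / (16 * sqrt (real t))"
proof -
  define d where "d = damping eps"
  define T0 where "T0 = nat \<lceil>4 / eps^2\<rceil> + 1"
  have d: "0 \<le> d" "d < 1" using eps damping_nonneg[of eps] damping_le[of eps] by (auto simp: d_def)
  obtain K where K: "d^K < 1/2" using real_arch_pow_inv[of "1/2" d] d by auto
  have "yseq eps t \<ge> inverse eps / (16 * sqrt (real t))" if "T0 + K \<le> t" for t
  proof -
    have "d^(t - T0) \<le> d^K" using that d by (intro power_decreasing) auto
    have "1 / (16 * eps) = (1/4) / (4 * eps)" by simp
    also have "\<dots> \<le> (1 - 2*eps) / (4 * eps)" using eps by (intro divide_right_mono) auto
    also have "\<dots> = d/2 / (1 - d) * (1/2)" using eps by (simp add: d_def damping_def field_simps)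
    also have "\<dots> \<le> d/2 / (1 - d) * (1 - d^(t - T0))"
      using \<open>d^(t - T0) \<le> d^K\<close> K d by (intro mult_left_mono) auto
    also have "\<dots> \<le> yseq eps t * sqrt (real t)"
      using yseq_scaled_ge_geometric[OF eps, of "t - T0"] that
      unfolding d_def T0_def[symmetric] by (simp del: yseq.simps)
    finally have bound: "1 / (16 * eps) \<le> yseq eps t * sqrt (real t)" .
    have "0 < sqrt (real t)" using that by (simp add: T0_def)
    then have "inverse eps / (16 * sqrt (real t)) = (1 / (16 * eps)) / sqrt (real t)"
      by (simp add: field_simps)
    also have "\<dots> \<le> (yseq eps t * sqrt (real t)) / sqrt (real t)"
      using bound \<open>0 < sqrt (real t)\<close> by (intro divide_right_mono) auto
    also have "\<dots> = yseq eps t" using \<open>0 < sqrt (real t)\<close> by simp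
    finally show ?thesis .
  qed
  then show ?thesis by blast
qed

theorem lemma4:
  fixes eps :: real
  assumes "0 < eps" and "eps \<le> 1/4"
  shows "(\<forall>t\<ge>1. 0 \<le> yseq eps t \<and> yseq eps t \<le> 2)
       \<and> (\<forall>t\<ge>1. yseq eps t \<le> 2 * inverse eps / sqrt (real t))
       \<and> (\<exists>t1. \<forall>t\<ge>t1. t \<ge> 1 \<longrightarrow> yseq eps t \<ge> inverse eps / (16 * sqrt (real t)))"
proof (intro conjI)
  show "\<forall>t\<ge>1. 0 \<le> yseq eps t \<and> yseq eps t \<le> 2"
    using yseq_bounded[of eps] assms by simp
  show "\<forall>t\<ge>1. yseq eps t \<le> 2 * inverse eps / sqrt (real t)"
    using yseq_upper_bound[OF assms] by (simp add: divide_inverse mult.assoc)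
qed (rule yseq_eventually_lower[OF assms])

end
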